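(* Assume $\mathcal I$ is $\tau$-standard. Then: (a) for every $\underline d\in\mathbb N_0^m$ there is exactly one weakly decreasing sequence $I_1\supseteq\dots\supseteq I_s$ in $\mathcal I$ (with $s\ge0$) such that $\sum_{k=1}^se_{I_k}=\underline d$; (b) for every $I\in\mathcal I$ and $d\in\mathbb N_0$, $\mathrm{LS}^+_{\lambda_I}(d)=\mathrm{LS}^+_{\underline\lambda}(d\,e_I)$, where $\mathrm{LS}^+_{\lambda_I}(d)$ denotes the set of elements of $\mathrm{LS}^+_{\underline\lambda}$ of degree $d e_I$ whose support lies in $\{(\theta,J)\in D(\underline\lambda,\tau):J=I\}$.
   Context: Let $G$ be a connected, simply-connected, simple algebraic group over an algebraically closed field of characteristic zero, $T\subseteq B$, $W$ the Weyl group, $W_\nu$ stabilizers; $W/W_{Q'}$ has the Bruhat order, $\pi_{Q_2}$ denotes projections and $\min_{Q_1},\max_{Q_1}$ minimal/maximal preimages, $\min_B(\theta)$ minimal representatives. Standing data: dominant $\lambda_1,\dots,\lambda_m$, $\underline\lambda=(\lambda_1,\dots,\lambda_m)$, $\lambda=\sum\lambda_i$, $Q=BW_\lambda B$, $\tau\in W/W_Q$. $\mathcal I$ is a set of nonempty subsets of $[m]$ ordered by inclusion, graded of length $m-1$, satisfying ( * ): $\underline J\subseteq I\Rightarrow J\subseteq I$ (with $\underline J=J$ if $J$ is minimal in $\mathcal I$, else $\underline J=\bigcup\{J\setminus K:K\in\mathcal I$ covered by $J\}$); $e_I=\sum_{i\in\underline I}e_i\in\mathbb N_0^m$, $\lambda_I=\sum_{i\in\underline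 I}\lambda_i$, $P_I=BW_{\lambda_I}B$. $\underline W(\underline\lambda,\tau)=\bigsqcup_I\{\theta\in W/W_{P_I}:\theta\le\pi_{P_I}(\tau)\}\times\{I\}$, ordered by the transitive closure of $(\theta,I)\ge(\phi,J)$ iff $I\supseteq J$ and $\max_Q(\theta)\ge\min_Q(\phi)$; a chain is $\tau$-standard if it lifts (same index sets) along $(\theta,I)\mapsto(\pi_{P_I}(\theta),I)$ to a chain in $\{\theta\in W/W_Q:\theta\le\tau\}\times\mathcal I$ (product order). $D(\underline\lambda,\tau)$ (order $\succeq$): elements lying in a lift of some maximal $\tau$-standard chain, $x\succeq y$ iff $x\ge y$ and both lie in a common such lift. $\mathcal I$ is $\tau$-standard if the projection $D(\underline\lambda,\tau)\to\underline W(\underline\lambda,\tau)$ is a poset isomorphism. Bond numbers for covering $(\theta,I)\succ(\phi,J)$: $|\langle\phi(\lambda_I),\beta^\vee\rangle|$ if $I=J$ ($\beta$ the positive root with $s_\beta\min_B(\phi)=\min_B(\theta)$), $1$ if $I\neq J$. For a maximal chain $\mathfrak C:p_r\succ\dots\succ p_0$: $\mathrm{LS}_{\mathfrak C}=\{\sum a_ie_{p_i}:b_{p_i,p_{i-1}}(a_i+\dots+a_r)\in\mathbb Z\ \forall i\in[r],\ \sum a_i\in\mathbb Z\}$; $\mathrm{LS}^+_{\underline\lambda}=\bigcup_{\mathfrak C}(\mathrm{LS}_{\mathfrak C}\cap\mathbb Q^{\mathfrak C}_{\ge0})$; $\deg e_{(\theta,I)}=e_I$ (extended linearly), and $\mathrm{LS}^+_{\underline\lambda}(\underline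 d)$ consists of elements of degree $\underline d$. *)

theory Defs
  imports "HOL-Analysis.Analysis"
begin

section \<open>Root systems, Weyl group, Bruhat order (data of G, T, B)\<close>

definition pairing :: "'a::euclidean_space \<Rightarrow> 'a \<Rightarrow> real" where
  "pairing v \<alpha> = 2 * (v \<bullet> \<alpha>) / (\<alpha> \<bullet> \<alpha>)"

definition sref :: "'a::euclidean_space \<Rightarrow> 'a \<Rightarrow> 'a" where
  "sref \<alpha> v = v - pairing v \<alpha> *\<^sub>R \<alpha>"

definition root_system :: "'a::euclidean_space set \<Rightarrow> bool" where
  "root_system R \<longleftrightarrow> finite R \<and> 0 \<notin> R \<and> span R = UNIV
     \<and> (\<forall>\<alpha>\<in>R. \<forall>\<beta>\<in>R. sref \<alpha> \<beta> \<in> R \<and> pairing \<beta> \<alpha> \<in> \<int>)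
     \<and> (\<forall>\<alpha>\<in>R. \<forall>c. c *\<^sub>R \<alpha> \<in> R \<longrightarrow> c = 1 \<or> c = -1)"

definition irreducible_rs :: "'a::euclidean_space set \<Rightarrow> bool" where
  "irreducible_rs R \<longleftrightarrow> R \<noteq> {} \<and> \<not> (\<exists>A B. A \<union> B = R \<and> A \<noteq> {} \<and> B \<noteq> {}
        \<and> (\<forall>\<alpha>\<in>A. \<forall>\<beta>\<in>B. \<alpha> \<bullet> \<beta> = 0))"

text \<open>A base (set of simple roots) of R; it corresponds to the choice of the Borel B.\<close>
definition is_base :: "'a::euclidean_space set \<Rightarrow> 'a set \<Rightarrow> bool" where
  "is_base R \<Delta> \<longleftrightarrow> \<Delta> \<subseteq> R \<and> independent \<Delta> \<and>
     (\<forall>\<alpha>\<in>R. \<exists>c. \<alpha> = (\<Sum>\<delta>\<in>\<Delta>. c \<delta> *\<^sub>R \<delta>) \<and> (\<forall>\<delta>\<in>\<Delta>. c \<delta> \<in> \<int>)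
        \<and> ((\<forall>\<delta>\<in>\<Delta>. c \<delta> \<ge> 0) \<or> (\<forall>\<delta>\<in>\<Delta>. c \<delta> \<le> 0)))"

definition pos_roots :: "'a::euclidean_space set \<Rightarrow> 'a set \<Rightarrow> 'a set" where
  "pos_roots R \<Delta> = {\<alpha>\<in>R. \<exists>c. \<alpha> = (\<Sum>\<delta>\<in>\<Delta>. c \<delta> *\<^sub>R \<delta>) \<and> (\<forall>\<delta>\<in>\<Delta>. c \<delta> \<in> \<int> \<and> c \<delta> \<ge> 0)}"

inductive_set weyl :: "'a::euclidean_space set \<Rightarrow> ('a \<Rightarrow> 'a) set" for R where
  weyl_id: "id \<in> weyl R"
| weyl_step: "w \<in> weyl R \<Longrightarrow> \<alpha> \<in> R \<Longrightarrow> sref \<alpha> \<circ> w \<in> weyl R"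

definition len :: "'a::euclidean_space set \<Rightarrow> 'a set \<Rightarrow> ('a \<Rightarrow> 'a) \<Rightarrow> nat" where
  "len R \<Delta> w = card {\<alpha>\<in>pos_roots R \<Delta>. w \<alpha> \<notin> pos_roots R \<Delta>}"

definition bruhat_step :: "'a::euclidean_space set \<Rightarrow> 'a set \<Rightarrow> (('a \<Rightarrow> 'a) \<times> ('a \<Rightarrow> 'a)) set" where
  "bruhat_step R \<Delta> = {(w, sref \<beta> \<circ> w) | w \<beta>. w \<in> weyl R \<and> \<beta> \<in> pos_roots R \<Delta>
       \<and> len R \<Delta> w < len R \<Delta> (sref \<beta> \<circ> w)}"

definition bruhat_le :: "'a::euclidean_space set \<Rightarrow> 'a set \<Rightarrow> ('a \<Rightarrow> 'a) \<Rightarrow> ('a \<Rightarrow> 'a) \<Rightarrow> bool" where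
  "bruhat_le R \<Delta> u w \<longleftrightarrow> (u, w) \<in> (bruhat_step R \<Delta>)\<^sup>*"

text \<open>Weights (G simply connected: the full weight lattice) and dominant weights.\<close>
definition weights :: "'a::euclidean_space set \<Rightarrow> 'a set" where
  "weights R = {v. \<forall>\<alpha>\<in>R. pairing v \<alpha> \<in> \<int>}"

definition dominant :: "'a::euclidean_space set \<Rightarrow> 'a set \<Rightarrow> 'a \<Rightarrow> bool" where
  "dominant R \<Delta> v \<longleftrightarrow> v \<in> weights R \<and> (\<forall>\<alpha>\<in>\<Delta>. pairing v \<alpha> \<ge> 0)"

text \<open>Left cosets w W_nu, where W_nu is the stabilizer of nu; W/W_nu.\<close>
definition coset :: "'a::euclidean_space set \<Rightarrow> 'a \<Rightarrow> ('a \<Rightarrow> 'a) \<Rightarrow> ('a \<Rightarrow> 'a) set" where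
  "coset R \<nu> w = {u\<in>weyl R. u \<nu> = w \<nu>}"

definition cosets :: "'a::euclidean_space set \<Rightarrow> 'a \<Rightarrow> ('a \<Rightarrow> 'a) set set" where
  "cosets R \<nu> = coset R \<nu> ` weyl R"

definition minB :: "'a::euclidean_space set \<Rightarrow> 'a set \<Rightarrow> ('a \<Rightarrow> 'a) set \<Rightarrow> ('a \<Rightarrow> 'a)" where
  "minB R \<Delta> \<theta> = (ARG_MIN (len R \<Delta>) w. w \<in> \<theta>)"

definition coset_le :: "'a::euclidean_space set \<Rightarrow> 'a set \<Rightarrow> ('a \<Rightarrow> 'a) set \<Rightarrow> ('a \<Rightarrow> 'a) set \<Rightarrow> bool" where
  "coset_le R \<Delta> \<theta> \<phi> \<longleftrightarrow> bruhat_le R \<Delta> (minB R \<Delta> \<theta>) (minB R \<Delta> \<phi>)"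

definition proj :: "'a::euclidean_space set \<Rightarrow> 'a set \<Rightarrow> 'a \<Rightarrow> ('a \<Rightarrow> 'a) set \<Rightarrow> ('a \<Rightarrow> 'a) set" where
  "proj R \<Delta> \<nu> \<theta> = coset R \<nu> (minB R \<Delta> \<theta>)"

definition min_pre :: "'a::euclidean_space set \<Rightarrow> 'a set \<Rightarrow> 'a \<Rightarrow> 'a \<Rightarrow> ('a \<Rightarrow> 'a) set \<Rightarrow> ('a \<Rightarrow> 'a) set" where
  "min_pre R \<Delta> \<nu>1 \<nu>2 \<theta> = (THE \<eta>. \<eta> \<in> cosets R \<nu>1 \<and> proj R \<Delta> \<nu>2 \<eta> = \<theta> \<and>
      (\<forall>\<eta>'\<in>cosets R \<nu>1. proj R \<Delta> \<nu>2 \<eta>' = \<theta> \<longrightarrow> coset_le R \<Delta> \<eta> \<eta>'))"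

definition max_pre :: "'a::euclidean_space set \<Rightarrow> 'a set \<Rightarrow> 'a \<Rightarrow> 'a \<Rightarrow> ('a \<Rightarrow> 'a) set \<Rightarrow> ('a \<Rightarrow> 'a) set" where
  "max_pre R \<Delta> \<nu>1 \<nu>2 \<theta> = (THE \<eta>. \<eta> \<in> cosets R \<nu>1 \<and> proj R \<Delta> \<nu>2 \<eta> = \<theta> \<and>
      (\<forall>\<eta>'\<in>cosets R \<nu>1. proj R \<Delta> \<nu>2 \<eta>' = \<theta> \<longrightarrow> coset_le R \<Delta> \<eta>' \<eta>))"

definition minimal_in :: "nat set set \<Rightarrow> nat set \<Rightarrow> bool" where
  "minimal_in \<I> J \<longleftrightarrow> \<not> (\<exists>K\<in>\<I>. K \<subset> J)"

definition covers :: "nat set set \<Rightarrow> nat set \<Rightarrow> nat set \<Rightarrow> bool" where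
  "covers \<I> J K \<longleftrightarrow> K \<in> \<I> \<and> K \<subset> J \<and> \<not> (\<exists>L\<in>\<I>. K \<subset> L \<and> L \<subset> J)"

definition ul :: "nat set set \<Rightarrow> nat set \<Rightarrow> nat set" where
  "ul \<I> J = (if minimal_in \<I> J then J else \<Union>{J - K | K. covers \<I> J K})"

definition eI :: "nat set set \<Rightarrow> nat set \<Rightarrow> nat \<Rightarrow> nat" where
  "eI \<I> J = (\<lambda>k. if k \<in> ul \<I> J then 1 else 0)"

definition lamI :: "nat set set \<Rightarrow> (nat \<Rightarrow> 'a::euclidean_space) \<Rightarrow> nat set \<Rightarrow> 'a" where
  "lamI \<I> lam J = (\<Sum>i\<in>ul \<I> J. lam i)"

definition lamsum :: "(nat \<Rightarrow> 'a::euclidean_space) \<Rightarrow> nat \<Rightarrow> 'a" where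
  "lamsum lam m = (\<Sum>i\<in>{1..m}. lam i)"

definition subset_chain :: "nat set set \<Rightarrow> bool" where
  "subset_chain C \<longleftrightarrow> (\<forall>A\<in>C. \<forall>B\<in>C. A \<subseteq> B \<or> B \<subseteq> A)"

text \<open>Nonempty subsets of [m], graded of length m-1: every maximal chain has m elements.\<close>
definition index_system :: "nat \<Rightarrow> nat set set \<Rightarrow> bool" where
  "index_system m \<I> \<longleftrightarrow> (\<forall>I\<in>\<I>. I \<noteq> {} \<and> I \<subseteq> {1..m}) \<and>
     (\<forall>C. C \<subseteq> \<I> \<and> subset_chain C \<and> (\<forall>C'. C \<subseteq> C' \<and> C' \<subseteq> \<I> \<and> subset_chain C' \<longrightarrow> C' = C)
          \<longrightarrow> card C = m)"

definition cond_star :: "nat set set \<Rightarrow> bool" where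
  "cond_star \<I> \<longleftrightarrow> (\<forall>I\<in>\<I>. \<forall>J\<in>\<I>. ul \<I> J \<subseteq> I \<longrightarrow> J \<subseteq> I)"

section \<open>The posets W(lambda,tau) and D(lambda,tau)\<close>

type_synonym 'a elt = "('a \<Rightarrow> 'a) set \<times> nat set"

definition Wl :: "'a::euclidean_space set \<Rightarrow> 'a set \<Rightarrow> (nat \<Rightarrow> 'a) \<Rightarrow> nat \<Rightarrow> nat set set
     \<Rightarrow> ('a \<Rightarrow> 'a) set \<Rightarrow> 'a elt set" where
  "Wl R \<Delta> lam m \<I> \<tau> = {(\<theta>, I). I \<in> \<I> \<and> \<theta> \<in> cosets R (lamI \<I> lam I)
      \<and> coset_le R \<Delta> \<theta> (proj R \<Delta> (lamI \<I> lam I) \<tau>)}"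

definition wl_rel :: "'a::euclidean_space set \<Rightarrow> 'a set \<Rightarrow> (nat \<Rightarrow> 'a) \<Rightarrow> nat \<Rightarrow> nat set set
     \<Rightarrow> ('a \<Rightarrow> 'a) set \<Rightarrow> ('a elt \<times> 'a elt) set" where
  "wl_rel R \<Delta> lam m \<I> \<tau> = {(x, y). x \<in> Wl R \<Delta> lam m \<I> \<tau> \<and> y \<in> Wl R \<Delta> lam m \<I> \<tau>
      \<and> snd y \<subseteq> snd x
      \<and> coset_le R \<Delta> (min_pre R \<Delta> (lamsum lam m) (lamI \<I> lam (snd y)) (fst y))
                     (max_pre R \<Delta> (lamsum lam m) (lamI \<I> lam (snd x)) (fst x))}"

definition wl_ge :: "'a::euclidean_space set \<Rightarrow> 'a set \<Rightarrow> (nat \<Rightarrow> 'a) \<Rightarrow> nat \<Rightarrow> nat set set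
     \<Rightarrow> ('a \<Rightarrow> 'a) set \<Rightarrow> 'a elt \<Rightarrow> 'a elt \<Rightarrow> bool" where
  "wl_ge R \<Delta> lam m \<I> \<tau> x y \<longleftrightarrow> (x, y) \<in> (wl_rel R \<Delta> lam m \<I> \<tau>)\<^sup>+"

definition Wtau :: "'a::euclidean_space set \<Rightarrow> 'a set \<Rightarrow> (nat \<Rightarrow> 'a) \<Rightarrow> nat
     \<Rightarrow> ('a \<Rightarrow> 'a) set \<Rightarrow> ('a \<Rightarrow> 'a) set set" where
  "Wtau R \<Delta> lam m \<tau> = {\<theta>\<in>cosets R (lamsum lam m). coset_le R \<Delta> \<theta> \<tau>}"

definition prod_ge :: "'a::euclidean_space set \<Rightarrow> 'a set \<Rightarrow> 'a elt \<Rightarrow> 'a elt \<Rightarrow> bool" where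
  "prod_ge R \<Delta> x y \<longleftrightarrow> coset_le R \<Delta> (fst y) (fst x) \<and> snd y \<subseteq> snd x"

definition is_lift :: "'a::euclidean_space set \<Rightarrow> 'a set \<Rightarrow> (nat \<Rightarrow> 'a) \<Rightarrow> nat \<Rightarrow> nat set set
     \<Rightarrow> ('a \<Rightarrow> 'a) set \<Rightarrow> 'a elt set \<Rightarrow> 'a elt set \<Rightarrow> bool" where
  "is_lift R \<Delta> lam m \<I> \<tau> C L \<longleftrightarrow> (\<exists>f. (\<forall>x\<in>C. fst (f x) \<in> Wtau R \<Delta> lam m \<tau> \<and> snd (f x) = snd x
        \<and> snd x \<in> \<I> \<and> proj R \<Delta> (lamI \<I> lam (snd x)) (fst (f x)) = fst x)
      \<and> L = f ` C \<and> (\<forall>a\<in>L. \<forall>b\<in>L. prod_ge R \<Delta> a b \<or> prod_ge R \<Delta> b a))"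

definition std_chain :: "'a::euclidean_space set \<Rightarrow> 'a set \<Rightarrow> (nat \<Rightarrow> 'a) \<Rightarrow> nat \<Rightarrow> nat set set
     \<Rightarrow> ('a \<Rightarrow> 'a) set \<Rightarrow> 'a elt set \<Rightarrow> bool" where
  "std_chain R \<Delta> lam m \<I> \<tau> C \<longleftrightarrow> C \<subseteq> Wl R \<Delta> lam m \<I> \<tau>
     \<and> (\<forall>x\<in>C. \<forall>y\<in>C. wl_ge R \<Delta> lam m \<I> \<tau> x y \<or> wl_ge R \<Delta> lam m \<I> \<tau> y x)
     \<and> (\<exists>L. is_lift R \<Delta> lam m \<I> \<tau> C L)"

definition max_std_chain :: "'a::euclidean_space set \<Rightarrow> 'a set \<Rightarrow> (nat \<Rightarrow> 'a) \<Rightarrow> nat \<Rightarrow> nat set set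
     \<Rightarrow> ('a \<Rightarrow> 'a) set \<Rightarrow> 'a elt set \<Rightarrow> bool" where
  "max_std_chain R \<Delta> lam m \<I> \<tau> C \<longleftrightarrow> std_chain R \<Delta> lam m \<I> \<tau> C
     \<and> (\<forall>C'. std_chain R \<Delta> lam m \<I> \<tau> C' \<and> C \<subseteq> C' \<longrightarrow> C' = C)"

definition Dset :: "'a::euclidean_space set \<Rightarrow> 'a set \<Rightarrow> (nat \<Rightarrow> 'a) \<Rightarrow> nat \<Rightarrow> nat set set
     \<Rightarrow> ('a \<Rightarrow> 'a) set \<Rightarrow> 'a elt set" where
  "Dset R \<Delta> lam m \<I> \<tau> = \<Union>{L. \<exists>C. max_std_chain R \<Delta> lam m \<I> \<tau> C \<and> is_lift R \<Delta> lam m \<I> \<tau> C L}"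

definition D_ge :: "'a::euclidean_space set \<Rightarrow> 'a set \<Rightarrow> (nat \<Rightarrow> 'a) \<Rightarrow> nat \<Rightarrow> nat set set
     \<Rightarrow> ('a \<Rightarrow> 'a) set \<Rightarrow> 'a elt \<Rightarrow> 'a elt \<Rightarrow> bool" where
  "D_ge R \<Delta> lam m \<I> \<tau> x y \<longleftrightarrow> prod_ge R \<Delta> x y \<and>
     (\<exists>C L. max_std_chain R \<Delta> lam m \<I> \<tau> C \<and> is_lift R \<Delta> lam m \<I> \<tau> C L \<and> x \<in> L \<and> y \<in> L)"

definition pD :: "'a::euclidean_space set \<Rightarrow> 'a set \<Rightarrow> (nat \<Rightarrow> 'a) \<Rightarrow> nat set set \<Rightarrow> 'a elt \<Rightarrow> 'a elt" where
  "pD R \<Delta> lam \<I> x = (proj R \<Delta> (lamI \<I> lam (snd x)) (fst x), snd x)"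

definition tau_standard :: "'a::euclidean_space set \<Rightarrow> 'a set \<Rightarrow> (nat \<Rightarrow> 'a) \<Rightarrow> nat \<Rightarrow> nat set set
     \<Rightarrow> ('a \<Rightarrow> 'a) set \<Rightarrow> bool" where
  "tau_standard R \<Delta> lam m \<I> \<tau> \<longleftrightarrow>
     bij_betw (pD R \<Delta> lam \<I>) (Dset R \<Delta> lam m \<I> \<tau>) (Wl R \<Delta> lam m \<I> \<tau>)
     \<and> (\<forall>x\<in>Dset R \<Delta> lam m \<I> \<tau>. \<forall>y\<in>Dset R \<Delta> lam m \<I> \<tau>.
          D_ge R \<Delta> lam m \<I> \<tau> x y \<longleftrightarrow> wl_ge R \<Delta> lam m \<I> \<tau> (pD R \<Delta> lam \<I> x) (pD R \<Delta> lam \<I> y))"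

section \<open>Bond numbers and LS-paths\<close>

text \<open>Bond number b_{x,y} for a covering x > y in D.\<close>
definition bond :: "'a::euclidean_space set \<Rightarrow> 'a set \<Rightarrow> (nat \<Rightarrow> 'a) \<Rightarrow> nat set set
     \<Rightarrow> 'a elt \<Rightarrow> 'a elt \<Rightarrow> real" where
  "bond R \<Delta> lam \<I> x y = (if snd x = snd y then
      \<bar>pairing (minB R \<Delta> (fst y) (lamI \<I> lam (snd x)))
        (THE \<beta>. \<beta> \<in> pos_roots R \<Delta> \<and> sref \<beta> \<circ> minB R \<Delta> (fst y) = minB R \<Delta> (fst x))\<bar>
     else 1)"

definition D_maxchain :: "'a::euclidean_space set \<Rightarrow> 'a set \<Rightarrow> (nat \<Rightarrow> 'a) \<Rightarrow> nat \<Rightarrow> nat set set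
     \<Rightarrow> ('a \<Rightarrow> 'a) set \<Rightarrow> 'a elt list \<Rightarrow> bool" where
  "D_maxchain R \<Delta> lam m \<I> \<tau> ps \<longleftrightarrow> ps \<noteq> [] \<and> distinct ps \<and> set ps \<subseteq> Dset R \<Delta> lam m \<I> \<tau>
     \<and> (\<forall>i. 0 < i \<and> i < length ps \<longrightarrow> D_ge R \<Delta> lam m \<I> \<tau> (ps ! i) (ps ! (i - 1)))
     \<and> (\<forall>a\<in>set ps. \<forall>b\<in>set ps. D_ge R \<Delta> lam m \<I> \<tau> a b \<or> D_ge R \<Delta> lam m \<I> \<tau> b a)
     \<and> (\<forall>C. set ps \<subseteq> C \<and> C \<subseteq> Dset R \<Delta> lam m \<I> \<tau>
           \<and> (\<forall>a\<in>C. \<forall>b\<in>C. D_ge R \<Delta> lam m \<I> \<tau> a b \<or> D_ge R \<Delta> lam m \<I> \<tau> b a) \<longrightarrow> C = set ps)"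

text \<open>Elements of the Q-vector space with basis (e_p)_{p in D} are functions 'a elt => rat.\<close>
definition LS_ch :: "'a::euclidean_space set \<Rightarrow> 'a set \<Rightarrow> (nat \<Rightarrow> 'a) \<Rightarrow> nat set set
     \<Rightarrow> 'a elt list \<Rightarrow> ('a elt \<Rightarrow> rat) set" where
  "LS_ch R \<Delta> lam \<I> ps = {x. (\<forall>p. p \<notin> set ps \<longrightarrow> x p = 0)
      \<and> (\<forall>i\<in>{1..<length ps}. bond R \<Delta> lam \<I> (ps ! i) (ps ! (i - 1))
              * real_of_rat (\<Sum>j\<in>{i..<length ps}. x (ps ! j)) \<in> \<int>)
      \<and> (\<Sum>j<length ps. x (ps ! j)) \<in> \<int>}"

definition LSplus :: "'a::euclidean_space set \<Rightarrow> 'a set \<Rightarrow> (nat \<Rightarrow> 'a) \<Rightarrow> nat \<Rightarrow> nat set set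
     \<Rightarrow> ('a \<Rightarrow> 'a) set \<Rightarrow> ('a elt \<Rightarrow> rat) set" where
  "LSplus R \<Delta> lam m \<I> \<tau> = {x. \<exists>ps. D_maxchain R \<Delta> lam m \<I> \<tau> ps \<and> x \<in> LS_ch R \<Delta> lam \<I> ps
       \<and> (\<forall>p. x p \<ge> 0)}"

definition degree :: "'a::euclidean_space set \<Rightarrow> 'a set \<Rightarrow> (nat \<Rightarrow> 'a) \<Rightarrow> nat \<Rightarrow> nat set set
     \<Rightarrow> ('a \<Rightarrow> 'a) set \<Rightarrow> ('a elt \<Rightarrow> rat) \<Rightarrow> nat \<Rightarrow> rat" where
  "degree R \<Delta> lam m \<I> \<tau> x k = (\<Sum>p\<in>Dset R \<Delta> lam m \<I> \<tau>. x p * of_nat (eI \<I> (snd p) k))"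

definition LS_deg :: "'a::euclidean_space set \<Rightarrow> 'a set \<Rightarrow> (nat \<Rightarrow> 'a) \<Rightarrow> nat \<Rightarrow> nat set set
     \<Rightarrow> ('a \<Rightarrow> 'a) set \<Rightarrow> (nat \<Rightarrow> nat) \<Rightarrow> ('a elt \<Rightarrow> rat) set" where
  "LS_deg R \<Delta> lam m \<I> \<tau> d = {x\<in>LSplus R \<Delta> lam m \<I> \<tau>. \<forall>k. degree R \<Delta> lam m \<I> \<tau> x k = of_nat (d k)}"

definition LS_layer :: "'a::euclidean_space set \<Rightarrow> 'a set \<Rightarrow> (nat \<Rightarrow> 'a) \<Rightarrow> nat \<Rightarrow> nat set set
     \<Rightarrow> ('a \<Rightarrow> 'a) set \<Rightarrow> nat set \<Rightarrow> nat \<Rightarrow> ('a elt \<Rightarrow> rat) set" where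
  "LS_layer R \<Delta> lam m \<I> \<tau> I d = {x\<in>LS_deg R \<Delta> lam m \<I> \<tau> (\<lambda>k. d * eI \<I> I k).
       \<forall>p. x p \<noteq> 0 \<longrightarrow> p \<in> Dset R \<Delta> lam m \<I> \<tau> \<and> snd p = I}"

end

theory Submission
  imports Defs
begin

text \<open>
  (a) is a greedy argument. For \<open>d \<noteq> 0\<close> with support \<open>S\<close>, gradedness of \<open>\<I>\<close> yields some
  \<open>J \<in> \<I>\<close> with \<open>ul \<I> J \<subseteq> S \<subseteq> J\<close>; removing \<open>e\<^sub>J\<close> and recursing gives a decreasing
  sequence. Condition (*) says that \<open>J\<close> is the only element of \<open>\<I>\<close> squeezed around \<open>S\<close> in
  this way, which forces the first term, hence the whole sequence, to be unique.

  (b) concerns the support of a nonnegative LS-path of degree \<open>d e\<^sub>I\<close>: it lies on a chain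
  of \<open>D(\<lambda>,\<tau>)\<close>, so its index sets are totally ordered. If some index set differs from \<open>I\<close>,
  take the largest such one, \<open>J\<close>; the part of the degree carried by the index sets \<open>\<noteq> I\<close> is
  still a multiple of \<open>e\<^sub>I\<close>, and its support lies between \<open>ul \<I> J\<close> and \<open>J\<close>, so (*) again
  forces \<open>J = I\<close>.
\<close>

subsection \<open>Finiteness of \<open>D(\<lambda>,\<tau>)\<close> and supports of LS-paths\<close>

lemma linear_sref: "linear (sref \<alpha>)"
  unfolding sref_def pairing_def
  by (rule linearI)
    (auto simp: inner_add_left inner_scaleR_left algebra_simps add_divide_distrib scaleR_add_left)

lemma weyl_linear_and_permutes_roots:
  assumes "root_system R" "w \<in> weyl R"
  shows "linear w \<and> w ` R \<subseteq> R"
  using assms(2)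
proof induction
  case weyl_id
  then show ?case by (simp add: id_def linear_ident)
next
  case (weyl_step w \<alpha>)
  have "linear (sref \<alpha> \<circ> w)"
    using weyl_step linear_sref linear_compose by blast
  moreover have "(sref \<alpha> \<circ> w) ` R \<subseteq> R"
    using weyl_step assms(1) by (auto simp: root_system_def)
  ultimately show ?case ..
qed

text \<open>A Weyl group element is determined by its restriction to the spanning set \<open>R\<close>.\<close>
lemma finite_weyl:
  assumes "root_system R"
  shows "finite (weyl R)"
proof -
  have "finite R" and span: "span R = UNIV"
    using assms by (auto simp: root_system_def)
  have "inj_on (\<lambda>w. restrict w R) (weyl R)"
  proof (rule inj_onI)
    fix v w assume "v \<in> weyl R" "w \<in> weyl R" and eq: "restrict v R = restrict w R"
    then have "linear v" "linear w"
      using weyl_linear_and_permutes_roots[OF assms] by auto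
    moreover have "\<And>x. x \<in> R \<Longrightarrow> v x = w x"
      using eq by (metis restrict_apply')
    ultimately show "v = w"
      using linear_eq_on_span[of v w R] span by auto
  qed
  moreover have "(\<lambda>w. restrict w R) ` weyl R \<subseteq> (\<Pi>\<^sub>E i\<in>R. R)"
    using weyl_linear_and_permutes_roots[OF assms] by (auto simp: PiE_iff) blast
  moreover have "finite (\<Pi>\<^sub>E i\<in>R. R)"
    using \<open>finite R\<close> by (intro finite_PiE) auto
  ultimately show ?thesis
    using finite_image_iff finite_subset by metis
qed

lemma Dset_subset: "Dset R \<Delta> lam m \<I> \<tau> \<subseteq> Pow (weyl R) \<times> \<I>"
proof
  fix p assume "p \<in> Dset R \<Delta> lam m \<I> \<tau>"
  then obtain C L where "is_lift R \<Delta> lam m \<I> \<tau> C L" "p \<in> L"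
    unfolding Dset_def by auto
  then obtain f c where "\<forall>x\<in>C. fst (f x) \<in> Wtau R \<Delta> lam m \<tau> \<and> snd (f x) = snd x \<and> snd x \<in> \<I>"
    and "c \<in> C" "p = f c"
    unfolding is_lift_def by blast
  then have "fst p \<in> Wtau R \<Delta> lam m \<tau>" "snd p \<in> \<I>"
    by auto
  then show "p \<in> Pow (weyl R) \<times> \<I>"
    by (cases p) (auto simp: Wtau_def cosets_def coset_def)
qed

lemma finite_Dset:
  assumes "root_system R" "finite \<I>"
  shows "finite (Dset R \<Delta> lam m \<I> \<tau>)"
  using finite_weyl[OF assms(1)] assms(2) by (intro finite_subset[OF Dset_subset]) auto

lemma LSplus_support_chain:
  assumes "x \<in> LSplus R \<Delta> lam m \<I> \<tau>" "x p \<noteq> 0" "x q \<noteq> 0"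
  shows "p \<in> Dset R \<Delta> lam m \<I> \<tau>" "snd p \<subseteq> snd q \<or> snd q \<subseteq> snd p"
proof -
  obtain ps where ps: "D_maxchain R \<Delta> lam m \<I> \<tau> ps" "x \<in> LS_ch R \<Delta> lam \<I> ps"
    using assms(1) unfolding LSplus_def by blast
  then have "p \<in> set ps" "q \<in> set ps"
    using assms(2,3) unfolding LS_ch_def by blast+
  then show "p \<in> Dset R \<Delta> lam m \<I> \<tau>"
    using ps(1) unfolding D_maxchain_def by blast
  have "D_ge R \<Delta> lam m \<I> \<tau> p q \<or> D_ge R \<Delta> lam m \<I> \<tau> q p"
    using ps(1) \<open>p \<in> set ps\<close> \<open>q \<in> set ps\<close> unfolding D_maxchain_def by blast
  then show "snd p \<subseteq> snd q \<or> snd q \<subseteq> snd p"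
    by (auto simp: D_ge_def prod_ge_def)
qed

lemma finite_chain_has_greatest:
  fixes f :: "'a \<Rightarrow> 'b::order"
  assumes "finite T" "T \<noteq> {}" "\<forall>p\<in>T. \<forall>q\<in>T. f p \<le> f q \<or> f q \<le> f p"
  shows "\<exists>p0\<in>T. \<forall>p\<in>T. f p \<le> f p0"
  using assms
proof (induction T rule: finite_ne_induct)
  case (insert x F)
  then obtain p0 where "p0 \<in> F" "\<forall>p\<in>F. f p \<le> f p0"
    by blast
  then show ?case
    using insert.prems by (metis insert_iff order.trans)
qed simp

definition maximal_subset_chain :: "nat set set \<Rightarrow> nat set set \<Rightarrow> bool" where
  "maximal_subset_chain \<I> C \<longleftrightarrow> C \<subseteq> \<I> \<and> subset_chain C
     \<and> (\<forall>C'. C \<subseteq> C' \<and> C' \<subseteq> \<I> \<and> subset_chain C' \<longrightarrow> C' = C)"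

lemma subset_chain_extends_to_maximal:
  assumes "finite \<I>" "C \<subseteq> \<I>" "subset_chain C"
  obtains C' where "C \<subseteq> C'" "maximal_subset_chain \<I> C'"
proof -
  define X where "X = {C'. C \<subseteq> C' \<and> C' \<subseteq> \<I> \<and> subset_chain C'}"
  have "finite X"
    using assms(1) unfolding X_def by (rule rev_finite_subset[OF finite_Pow_iff[THEN iffD2]]) auto
  moreover have "C \<in> X"
    using assms by (auto simp: X_def)
  ultimately obtain C0 where C0: "C0 \<in> X" "\<And>C'. C' \<in> X \<Longrightarrow> card C' \<le> card C0"
    using finite_chain_has_greatest[of X card] by fastforce
  have "maximal_subset_chain \<I> C0"
    unfolding maximal_subset_chain_def
  proof (intro conjI allI impI)
    show "C0 \<subseteq> \<I>" "subset_chain C0"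
      using C0 by (auto simp: X_def)
    fix C' assume C': "C0 \<subseteq> C' \<and> C' \<subseteq> \<I> \<and> subset_chain C'"
    then have "card C' \<le> card C0"
      using C0 by (intro C0(2)) (auto simp: X_def)
    moreover have "finite C'"
      using C' assms(1) finite_subset by blast
    ultimately show "C' = C0"
      using C' by (metis card_mono card_subset_eq le_antisym)
  qed
  then show ?thesis
    using C0 that by (auto simp: X_def)
qed

lemma ul_subset: "ul \<I> J \<subseteq> J"
  unfolding ul_def covers_def by auto

lemma ul_nonempty:
  assumes "finite \<I>" "J \<in> \<I>" "J \<noteq> {}" "finite J"
  shows "ul \<I> J \<noteq> {}"
proof (cases "minimal_in \<I> J")
  case True
  then show ?thesis using assms by (simp add: ul_def)
next
  case False
  define X where "X = {K\<in>\<I>. K \<subset> J}"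
  have "finite X" "X \<noteq> {}"
    using assms(1) False by (auto simp: X_def minimal_in_def)
  then obtain K0 where K0: "K0 \<in> X" "\<And>K. K \<in> X \<Longrightarrow> card K \<le> card K0"
    using finite_chain_has_greatest[of X card] by fastforce
  have "covers \<I> J K0"
    unfolding covers_def
  proof (intro conjI notI)
    show "K0 \<in> \<I>" "K0 \<subset> J"
      using K0 by (auto simp: X_def)
    assume "\<exists>L\<in>\<I>. K0 \<subset> L \<and> L \<subset> J"
    then obtain L where L: "L \<in> \<I>" "K0 \<subset> L" "L \<subset> J"
      by blast
    then have "card K0 < card L"
      using assms(4) by (meson finite_subset psubset_card_mono psubset_imp_subset)
    moreover have "L \<in> X"
      using L by (simp add: X_def)
    ultimately show False
      using K0(2) by fastforce
  qed
  then have "J - K0 \<subseteq> ul \<I> J"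
    using False by (auto simp: ul_def)
  moreover have "J - K0 \<noteq> {}"
    using K0 by (auto simp: X_def)
  ultimately show ?thesis by blast
qed

definition eI_sum :: "nat set set \<Rightarrow> nat set list \<Rightarrow> nat \<Rightarrow> nat" where
  "eI_sum \<I> Is k = (\<Sum>J\<leftarrow>Is. eI \<I> J k)"

lemma eI_sum_Cons: "eI_sum \<I> (J # Js) k = eI \<I> J k + eI_sum \<I> Js k"
  by (simp add: eI_sum_def)

lemma eI_sum_neq_0_iff: "eI_sum \<I> Is k \<noteq> 0 \<longleftrightarrow> (\<exists>J\<in>set Is. k \<in> ul \<I> J)"
  by (auto simp: eI_sum_def eI_def)

lemma eI_sum_support_subset_head:
  assumes "sorted_wrt (\<lambda>A B. B \<subseteq> A) (J # Js)" "eI_sum \<I> (J # Js) k \<noteq> 0"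
  shows "k \<in> J"
proof -
  obtain J' where "J' \<in> set (J # Js)" "k \<in> ul \<I> J'"
    using assms(2) eI_sum_neq_0_iff by blast
  moreover have "J' \<subseteq> J"
    using assms(1) \<open>J' \<in> set (J # Js)\<close> by auto
  ultimately show ?thesis
    using ul_subset by blast
qed

lemma sum_split_off_index:
  fixes x :: "'b \<Rightarrow> 'c::comm_ring"
  assumes "finite D" "T = {q\<in>D. x q \<noteq> 0 \<and> g q \<noteq> i}"
  shows "(\<Sum>q\<in>D. x q * c (g q)) = (\<Sum>q\<in>T. x q * c (g q)) + (\<Sum>q\<in>D - T. x q) * c i"
proof -
  have "T \<subseteq> D"
    using assms(2) by blast
  have "(\<Sum>q\<in>D - T. x q * c (g q)) = (\<Sum>q\<in>D - T. x q * c i)"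
    using assms(2) by (intro sum.cong) auto
  then show ?thesis
    using sum.subset_diff[OF \<open>T \<subseteq> D\<close> assms(1), of "\<lambda>q. x q * c (g q)"]
    by (simp add: sum_distrib_right add.commute)
qed

subsection \<open>Graded index systems satisfying (*)\<close>

locale star_index_system =
  fixes m :: nat and \<I> :: "nat set set"
  assumes index_system: "index_system m \<I>" and star: "cond_star \<I>"
begin

lemma index_mem: "J \<in> \<I> \<Longrightarrow> J \<noteq> {} \<and> J \<subseteq> {1..m}"
  using index_system by (auto simp: index_system_def)

lemma finite_index: "finite \<I>"
  using index_mem by (intro finite_subset[of \<I> "Pow {1..m}"]) auto

lemma finite_index_mem: "J \<in> \<I> \<Longrightarrow> finite J"
  using index_mem finite_subset by blast

lemma ul_index_nonempty: "J \<in> \<I> \<Longrightarrow> ul \<I> J \<noteq> {}"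
  using ul_nonempty[OF finite_index] index_mem finite_index_mem by blast

lemma subset_if_ul_subset: "J \<in> \<I> \<Longrightarrow> J' \<in> \<I> \<Longrightarrow> ul \<I> J \<subseteq> J' \<Longrightarrow> J \<subseteq> J'"
  using star unfolding cond_star_def by blast

lemma eq_if_ul_subset_both:
  assumes "J \<in> \<I>" "J' \<in> \<I>" "ul \<I> J \<subseteq> J'" "ul \<I> J' \<subseteq> J"
  shows "J = J'"
  using subset_if_ul_subset assms by blast

lemma card_image_maximal_chain:
  assumes "maximal_subset_chain \<I> C"
  shows "card ` C = {1..m}"
proof -
  have C: "C \<subseteq> \<I>" "subset_chain C"
    using assms by (auto simp: maximal_subset_chain_def)
  have "inj_on card C"
  proof (rule inj_onI)
    fix A B assume "A \<in> C" "B \<in> C" "card A = card B"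
    then show "A = B"
      using C finite_index_mem unfolding subset_chain_def by (metis card_subset_eq subsetD)
  qed
  moreover have "card C = m"
    using index_system assms unfolding index_system_def maximal_subset_chain_def by blast
  moreover have "card ` C \<subseteq> {1..m}"
  proof
    fix n assume "n \<in> card ` C"
    then obtain A where "A \<in> \<I>" "n = card A"
      using C by auto
    then show "n \<in> {1..m}"
      using index_mem[of A] finite_index_mem[of A] card_mono[of "{1..m}" A]
      by (auto simp: Suc_le_eq card_gt_0_iff)
  qed
  ultimately show ?thesis
    by (simp add: card_image card_subset_eq)
qed

lemma maximal_chain_through:
  assumes "J \<in> \<I>" "n \<in> {1..m}"
  obtains C A where "maximal_subset_chain \<I> C" "J \<in> C" "A \<in> C" "A \<in> \<I>" "card A = n"
proof -
  obtain C where "{J} \<subseteq> C" "maximal_subset_chain \<I> C"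
    using subset_chain_extends_to_maximal[OF finite_index, of "{J}"] assms(1)
    by (auto simp: subset_chain_def)
  moreover from this obtain A where "A \<in> C" "card A = n"
    using card_image_maximal_chain assms(2) by (metis imageE)
  ultimately show ?thesis
    using that by (auto simp: maximal_subset_chain_def)
qed

lemma top_mem:
  assumes "m \<ge> 1"
  shows "{1..m} \<in> \<I>"
proof -
  have "card ` {} \<noteq> {1..m}"
    using assms by simp
  then have "\<not> maximal_subset_chain \<I> {}"
    using card_image_maximal_chain by blast
  then have "\<I> \<noteq> {}"
    by (auto simp: maximal_subset_chain_def subset_chain_def)
  then obtain J where "J \<in> \<I>"
    by blast
  moreover have "m \<in> {1..m}"
    using assms by simp
  ultimately obtain A where "A \<in> \<I>" "card A = m"
    using maximal_chain_through by blast
  then have "A = {1..m}"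
    using index_mem[of A] by (intro card_subset_eq) auto
  then show ?thesis
    using \<open>A \<in> \<I>\<close> by simp
qed

lemma covers_diff_singleton:
  assumes "covers \<I> J K" "J \<in> \<I>"
  obtains j where "J - K = {j}"
proof -
  have K: "K \<in> \<I>" "K \<subset> J" and no_between: "\<not> (\<exists>L\<in>\<I>. K \<subset> L \<and> L \<subset> J)"
    using assms(1) by (auto simp: covers_def)
  have "finite J" "finite K"
    using assms(2) K finite_index_mem by auto
  have "card K < card J"
    using K \<open>finite J\<close> by (simp add: psubset_card_mono)
  obtain C where C: "{K, J} \<subseteq> C" "maximal_subset_chain \<I> C"
    using subset_chain_extends_to_maximal[OF finite_index, of "{K, J}"] K assms(2)
    by (auto simp: subset_chain_def)
  have chain: "subset_chain C" "C \<subseteq> \<I>"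
    using C by (auto simp: maximal_subset_chain_def)
  have "card J = Suc (card K)"
  proof (rule ccontr)
    assume "card J \<noteq> Suc (card K)"
    moreover have "card J \<le> m"
      using index_mem[OF assms(2)] card_mono[of "{1..m}" J] by simp
    ultimately have "Suc (card K) \<in> card ` C"
      using card_image_maximal_chain[OF C(2)] \<open>card K < card J\<close> by auto
    then obtain A where A: "A \<in> C" "card A = Suc (card K)"
      by auto
    have "finite A"
      using A chain finite_index_mem by blast
    have "A \<subseteq> K \<or> K \<subseteq> A" "A \<subseteq> J \<or> J \<subseteq> A"
      using chain A C unfolding subset_chain_def by blast+
    moreover have "\<not> A \<subseteq> K"
      using A \<open>finite K\<close> card_mono[of K A] by auto
    moreover have "\<not> J \<subseteq> A"
      using A \<open>card J \<noteq> Suc (card K)\<close> \<open>card K < card J\<close> \<open>finite A\<close> card_mono[of A J] by auto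
    ultimately have "K \<subset> A" "A \<subset> J"
      using A by auto
    then show False
      using no_between A chain by blast
  qed
  moreover have "card (J - K) = card J - card K"
    using K \<open>finite K\<close> card_Diff_subset[of K J] by auto
  ultimately have "card (J - K) = 1"
    by simp
  then show ?thesis
    using that by (auto simp: card_1_singleton_iff)
qed

lemma minimal_card_one:
  assumes "J \<in> \<I>" "minimal_in \<I> J"
  shows "card J = 1"
proof -
  have J: "J \<noteq> {}" "J \<subseteq> {1..m}" "finite J"
    using index_mem[OF assms(1)] finite_index_mem[OF assms(1)] by auto
  then have "1 \<in> {1..m}"
    by (metis atLeastAtMost_iff ex_in_conv le_trans order_refl subsetD)
  then obtain C A where C: "maximal_subset_chain \<I> C" "J \<in> C" "A \<in> C" "A \<in> \<I>" "card A = 1"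
    using maximal_chain_through[OF assms(1)] by blast
  then have "A \<subseteq> J \<or> J \<subseteq> A"
    unfolding maximal_subset_chain_def subset_chain_def by blast
  then show ?thesis
  proof
    assume "A \<subseteq> J"
    then have "A = J"
      using assms(2) C(4) unfolding minimal_in_def by blast
    then show ?thesis
      using C(5) by simp
  next
    assume "J \<subseteq> A"
    then have "card J \<le> 1"
      using C finite_index_mem card_mono[of A J] by auto
    moreover have "card J \<noteq> 0"
      using J by simp
    ultimately show ?thesis
      by linarith
  qed
qed

text \<open>Take \<open>J \<supseteq> S\<close> of least cardinality: a cover of \<open>J\<close> misses a point of \<open>S\<close>, and by
  gradedness it misses only one point.\<close>
lemma exists_index_between:
  assumes "S \<noteq> {}" "S \<subseteq> {1..m}"
  obtains J where "J \<in> \<I>" "S \<subseteq> J" "ul \<I> J \<subseteq> S"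
proof -
  have "m \<ge> 1"
    using assms by force
  then have "{1..m} \<in> \<I> \<and> S \<subseteq> {1..m}"
    using top_mem assms(2) by blast
  then obtain J where J: "J \<in> \<I>" "S \<subseteq> J"
    and least: "\<And>K. K \<in> \<I> \<and> S \<subseteq> K \<Longrightarrow> card J \<le> card K"
    using ex_has_least_nat[of "\<lambda>J. J \<in> \<I> \<and> S \<subseteq> J" "{1..m}" card] by blast
  have "finite J"
    using J(1) finite_index_mem by blast
  have "ul \<I> J \<subseteq> S"
  proof (cases "minimal_in \<I> J")
    case True
    obtain j where "J = {j}"
      by (rule card_1_singletonE[OF minimal_card_one[OF J(1) True]])
    then have "S = J"
      using J(2) assms(1) by blast
    then show ?thesis
      using True by (simp add: ul_def)
  next
    case False
    show ?thesis
    proof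
      fix x assume "x \<in> ul \<I> J"
      then obtain K where K: "covers \<I> J K" "x \<in> J - K"
        using False by (auto simp: ul_def)
      then obtain j where j: "J - K = {j}"
        using covers_diff_singleton J(1) by blast
      have "K \<in> \<I>" "K \<subset> J"
        using K(1) by (auto simp: covers_def)
      then have "card K < card J"
        using \<open>finite J\<close> psubset_card_mono by blast
      then have "\<not> S \<subseteq> K"
        using least \<open>K \<in> \<I>\<close> by fastforce
      then obtain s where "s \<in> S" "s \<in> J - K"
        using J(2) by blast
      then show "x \<in> S"
        using j K(2) by simp
    qed
  qed
  then show ?thesis
    using that J by blast
qed

subsection \<open>Decreasing decompositions of degrees\<close>

lemma eI_sum_nonzero:
  assumes "set Is \<subseteq> \<I>" "Is \<noteq> []"
  obtains k where "eI_sum \<I> Is k \<noteq> 0"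
proof -
  obtain J Js where "Is = J # Js"
    using assms(2) by (cases Is) auto
  moreover obtain k where "k \<in> ul \<I> J"
    using ul_index_nonempty assms(1) calculation by fastforce
  ultimately show ?thesis
    using that eI_sum_neq_0_iff by fastforce
qed

lemma eI_sum_same_head:
  assumes "set (J # Js) \<subseteq> \<I>" "sorted_wrt (\<lambda>A B. B \<subseteq> A) (J # Js)"
    and "set (J' # Js') \<subseteq> \<I>" "sorted_wrt (\<lambda>A B. B \<subseteq> A) (J' # Js')"
    and "eI_sum \<I> (J # Js) = eI_sum \<I> (J' # Js')"
  shows "J = J'"
proof (rule eq_if_ul_subset_both)
  show "J \<in> \<I>" "J' \<in> \<I>"
    using assms(1,3) by auto
  show "ul \<I> J \<subseteq> J'"
  proof
    fix k assume "k \<in> ul \<I> J"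
    then have "eI_sum \<I> (J' # Js') k \<noteq> 0"
      using assms(5) eI_sum_neq_0_iff[of \<I> "J # Js"] by (metis list.set_intros(1))
    then show "k \<in> J'"
      by (rule eI_sum_support_subset_head[OF assms(4)])
  qed
  show "ul \<I> J' \<subseteq> J"
  proof
    fix k assume "k \<in> ul \<I> J'"
    then have "eI_sum \<I> (J # Js) k \<noteq> 0"
      using assms(5) eI_sum_neq_0_iff[of \<I> "J' # Js'"] by (metis list.set_intros(1))
    then show "k \<in> J"
      by (rule eI_sum_support_subset_head[OF assms(2)])
  qed
qed

lemma eI_sum_inject:
  assumes "set Is \<subseteq> \<I>" "sorted_wrt (\<lambda>A B. B \<subseteq> A) Is"
    and "set Is' \<subseteq> \<I>" "sorted_wrt (\<lambda>A B. B \<subseteq> A) Is'"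
    and "eI_sum \<I> Is = eI_sum \<I> Is'"
  shows "Is = Is'"
  using assms
proof (induction Is arbitrary: Is')
  case Nil
  show ?case
  proof (rule ccontr)
    assume "[] \<noteq> Is'"
    then obtain k where "eI_sum \<I> Is' k \<noteq> 0"
      using eI_sum_nonzero Nil.prems(3) by metis
    moreover have "eI_sum \<I> Is' k = 0"
      using fun_cong[OF Nil.prems(5), of k] by (simp add: eI_sum_def)
    ultimately show False
      by simp
  qed
next
  case (Cons J Js)
  show ?case
  proof (cases Is')
    case Nil
    obtain k where "eI_sum \<I> (J # Js) k \<noteq> 0"
      using eI_sum_nonzero Cons.prems(1) by blast
    then show ?thesis
      using Cons.prems(5) Nil by (simp add: eI_sum_def)
  next
    case (Cons J' Js')
    then have "J = J'"
      using eI_sum_same_head Cons.prems by blast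
    moreover have "eI_sum \<I> Js = eI_sum \<I> Js'"
    proof
      fix k
      show "eI_sum \<I> Js k = eI_sum \<I> Js' k"
        using fun_cong[OF Cons.prems(5), of k] \<open>J = J'\<close> \<open>Is' = J' # Js'\<close> by (simp add: eI_sum_Cons)
    qed
    ultimately show ?thesis
      using Cons.IH[of Js'] Cons.prems \<open>Is' = J' # Js'\<close> by simp
  qed
qed

lemma exists_decreasing_eI_sum:
  assumes "\<forall>k. k \<notin> {1..m} \<longrightarrow> d k = 0"
  shows "\<exists>Is. set Is \<subseteq> \<I> \<and> sorted_wrt (\<lambda>A B. B \<subseteq> A) Is \<and> eI_sum \<I> Is = d"
  using assms
proof (induction "sum d {1..m}" arbitrary: d rule: less_induct)
  case less
  show ?case
  proof (cases "\<forall>k. d k = 0")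
    case True
    then show ?thesis
      by (intro exI[of _ "[]"]) (auto simp: eI_sum_def)
  next
    case False
    define S where "S = {k. d k \<noteq> 0}"
    have "S \<noteq> {}" "S \<subseteq> {1..m}"
      using False less.prems by (auto simp: S_def)
    then obtain J where J: "J \<in> \<I>" "S \<subseteq> J" "ul \<I> J \<subseteq> S"
      by (rule exists_index_between)
    define d' where "d' k = d k - eI \<I> J k" for k
    have le: "eI \<I> J k \<le> d k" for k
      using J(3) by (auto simp: eI_def S_def)
    obtain k0 where "k0 \<in> ul \<I> J"
      using ul_index_nonempty J(1) by blast
    then have "k0 \<in> {1..m}" "d' k0 < d k0"
      using J(3) \<open>S \<subseteq> {1..m}\<close> le[of k0] by (auto simp: d'_def eI_def S_def)
    then have "sum d' {1..m} < sum d {1..m}"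
      by (intro sum_strict_mono_ex1) (auto simp: d'_def)
    moreover have "\<forall>k. k \<notin> {1..m} \<longrightarrow> d' k = 0"
      using less.prems by (simp add: d'_def)
    ultimately obtain Is where Is: "set Is \<subseteq> \<I>" "sorted_wrt (\<lambda>A B. B \<subseteq> A) Is" "eI_sum \<I> Is = d'"
      using less.hyps by blast
    have "J' \<subseteq> J" if "J' \<in> set Is" for J'
    proof (rule subset_if_ul_subset)
      show "J' \<in> \<I>" "J \<in> \<I>"
        using that Is(1) J(1) by auto
      have "ul \<I> J' \<subseteq> {k. d' k \<noteq> 0}"
        using that Is(3) eI_sum_neq_0_iff by blast
      also have "\<dots> \<subseteq> J"
        using J(2) by (auto simp: d'_def S_def)
      finally show "ul \<I> J' \<subseteq> J" .
    qed
    show ?thesis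
    proof (intro exI[of _ "J # Is"] conjI)
      show "set (J # Is) \<subseteq> \<I>" "sorted_wrt (\<lambda>A B. B \<subseteq> A) (J # Is)"
        using Is J \<open>\<And>J'. J' \<in> set Is \<Longrightarrow> J' \<subseteq> J\<close> by auto
      show "eI_sum \<I> (J # Is) = d"
      proof
        fix k
        show "eI_sum \<I> (J # Is) k = d k"
          using fun_cong[OF Is(3), of k] le[of k] by (simp add: eI_sum_Cons d'_def)
      qed
    qed
  qed
qed

subsection \<open>LS-paths whose degree is a multiple of \<open>e\<^sub>I\<close>\<close>

lemma greatest_index_of_eI_multiple:
  fixes w :: "'b \<Rightarrow> rat" and f :: "'b \<Rightarrow> nat set"
  assumes "finite P" "p0 \<in> P" "I0 \<in> \<I>"
    and P: "\<And>p. p \<in> P \<Longrightarrow> 0 < w p \<and> f p \<in> \<I> \<and> f p \<subseteq> f p0"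
    and sum_eq: "\<And>k. (\<Sum>p\<in>P. w p * of_nat (eI \<I> (f p) k)) = a * of_nat (eI \<I> I0 k)"
  shows "f p0 = I0"
proof -
  have pos: "0 < a * of_nat (eI \<I> I0 k)" if "k \<in> ul \<I> (f p0)" for k
  proof -
    have "w p0 * of_nat (eI \<I> (f p0) k) \<le> (\<Sum>p\<in>P. w p * of_nat (eI \<I> (f p) k))"
      using assms(1,2) P by (intro member_le_sum) (auto simp: less_imp_le)
    moreover have "w p0 * of_nat (eI \<I> (f p0) k) = w p0"
      using that by (simp add: eI_def)
    ultimately show ?thesis
      using P[OF assms(2)] sum_eq[of k] by linarith
  qed
  have in_ul_I0: "k \<in> ul \<I> I0" if "k \<in> ul \<I> (f p0)" for k
    using pos[OF that] by (cases "k \<in> ul \<I> I0") (simp_all add: eI_def)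
  obtain k0 where "k0 \<in> ul \<I> (f p0)"
    using ul_index_nonempty P[OF assms(2)] by blast
  then have "0 < a"
    using pos in_ul_I0 by (simp add: eI_def)
  show ?thesis
  proof (rule eq_if_ul_subset_both)
    show "f p0 \<in> \<I>" "I0 \<in> \<I>"
      using P assms(2,3) by auto
    show "ul \<I> (f p0) \<subseteq> I0"
      using in_ul_I0 ul_subset by blast
    show "ul \<I> I0 \<subseteq> f p0"
    proof
      fix k assume "k \<in> ul \<I> I0"
      then have "(\<Sum>p\<in>P. w p * of_nat (eI \<I> (f p) k)) \<noteq> 0"
        using sum_eq[of k] \<open>0 < a\<close> by (simp add: eI_def)
      then obtain p where "p \<in> P" "w p * of_nat (eI \<I> (f p) k) \<noteq> 0"
        by (meson sum.neutral)
      then have "k \<in> f p"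
        using ul_subset by (auto simp: eI_def split: if_splits)
      then show "k \<in> f p0"
        using P[OF \<open>p \<in> P\<close>] by blast
    qed
  qed
qed

lemma LS_deg_multiple_support:
  assumes "root_system R" "I0 \<in> \<I>"
    and x: "x \<in> LS_deg R \<Delta> lam m \<I> \<tau> (\<lambda>k. d * eI \<I> I0 k)" and "x p \<noteq> 0"
  shows "p \<in> Dset R \<Delta> lam m \<I> \<tau> \<and> snd p = I0"
proof -
  define D where "D = Dset R \<Delta> lam m \<I> \<tau>"
  have "finite D"
    unfolding D_def using finite_Dset[OF assms(1) finite_index] .
  have xL: "x \<in> LSplus R \<Delta> lam m \<I> \<tau>" and "\<forall>q. 0 \<le> x q"
    using x unfolding LS_deg_def LSplus_def by auto
  have in_D: "q \<in> D" if "x q \<noteq> 0" for q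
    using LSplus_support_chain(1)[OF xL that that] by (simp add: D_def)
  have "snd p = I0"
  proof (rule ccontr)
    assume "snd p \<noteq> I0"
    define T where "T = {q\<in>D. x q \<noteq> 0 \<and> snd q \<noteq> I0}"
    have "T \<subseteq> D" "finite T" "p \<in> T"
      using \<open>finite D\<close> in_D \<open>x p \<noteq> 0\<close> \<open>snd p \<noteq> I0\<close> by (auto simp: T_def intro: finite_subset)
    moreover have "\<forall>q\<in>T. \<forall>q'\<in>T. snd q \<subseteq> snd q' \<or> snd q' \<subseteq> snd q"
      using LSplus_support_chain(2)[OF xL] by (auto simp: T_def)
    ultimately obtain p0 where p0: "p0 \<in> T" "\<forall>q\<in>T. snd q \<subseteq> snd p0"
      using finite_chain_has_greatest[of T snd] by blast
    define c0 where "c0 = (\<Sum>q\<in>D - T. x q)"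
    have "(\<Sum>q\<in>T. x q * of_nat (eI \<I> (snd q) k)) = (of_nat d - c0) * of_nat (eI \<I> I0 k)" for k
    proof -
      have "(\<Sum>q\<in>D. x q * of_nat (eI \<I> (snd q) k))
          = (\<Sum>q\<in>T. x q * of_nat (eI \<I> (snd q) k)) + c0 * of_nat (eI \<I> I0 k)"
        unfolding c0_def by (rule sum_split_off_index[OF \<open>finite D\<close> T_def])
      moreover have "(\<Sum>q\<in>D. x q * of_nat (eI \<I> (snd q) k)) = of_nat d * of_nat (eI \<I> I0 k)"
        using x unfolding LS_deg_def degree_def D_def by simp
      ultimately show ?thesis
        by (simp add: algebra_simps)
    qed
    moreover have "0 < x q \<and> snd q \<in> \<I> \<and> snd q \<subseteq> snd p0" if "q \<in> T" for q
      using that p0(2) \<open>\<forall>q. 0 \<le> x q\<close> Dset_subset \<open>T \<subseteq> D\<close>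
      by (fastforce simp: T_def D_def order_less_le)
    ultimately have "snd p0 = I0"
      using greatest_index_of_eI_multiple[OF \<open>finite T\<close> p0(1) assms(2)] by blast
    then show False
      using p0(1) by (simp add: T_def)
  qed
  then show ?thesis
    using in_D \<open>x p \<noteq> 0\<close> by (simp add: D_def)
qed

end

theorem mainTheorem16:
  fixes R \<Delta> :: "'a::euclidean_space set"
    and lam :: "nat \<Rightarrow> 'a" and m :: nat
    and \<I> :: "nat set set" and \<tau> :: "('a \<Rightarrow> 'a) set"
  assumes "root_system R" and "irreducible_rs R" and "is_base R \<Delta>"
    and "\<forall>i\<in>{1..m}. dominant R \<Delta> (lam i)"
    and "\<tau> \<in> cosets R (lamsum lam m)"
    and "index_system m \<I>" and "cond_star \<I>"
    and "tau_standard R \<Delta> lam m \<I> \<tau>"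
  shows "(\<forall>d::nat \<Rightarrow> nat. (\<forall>k. k \<notin> {1..m} \<longrightarrow> d k = 0) \<longrightarrow>
            (\<exists>!Is. set Is \<subseteq> \<I> \<and> sorted_wrt (\<lambda>A B. B \<subseteq> A) Is
                  \<and> (\<lambda>k. \<Sum>I\<leftarrow>Is. eI \<I> I k) = d))
       \<and> (\<forall>I\<in>\<I>. \<forall>d::nat. LS_layer R \<Delta> lam m \<I> \<tau> I d = LS_deg R \<Delta> lam m \<I> \<tau> (\<lambda>k. d * eI \<I> I k))"
proof -
  \<comment> \<open>Beyond gradedness and (*), only finiteness of the Weyl group is needed.\<close>
  interpret star_index_system m \<I>
    using assms(6,7) by unfold_locales
  have "\<exists>!Is. set Is \<subseteq> \<I> \<and> sorted_wrt (\<lambda>A B. B \<subseteq> A) Is \<and> eI_sum \<I> Is = d"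
    if "\<forall>k. k \<notin> {1..m} \<longrightarrow> d k = 0" for d
    using exists_decreasing_eI_sum[OF that] eI_sum_inject by blast
  moreover have "LS_layer R \<Delta> lam m \<I> \<tau> I d = LS_deg R \<Delta> lam m \<I> \<tau> (\<lambda>k. d * eI \<I> I k)"
    if "I \<in> \<I>" for I d
    using LS_deg_multiple_support[OF assms(1) that] unfolding LS_layer_def by blast
  ultimately show ?thesis
    unfolding eI_sum_def[abs_def] by blast
qed

end
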